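(* Let $m\ge2$ and $n$ be positive integers. For each complex matrix $a=(a_{\mathbf i})_{\mathbf i\in\mathcal M(m,n)}$ and each nonempty $S\subset\mathcal M(m,n)$, \[\frac{\sum_{\mathbf i\in S}|a_{\mathbf i}|}{E(S)}\le m\,\|a\|_{\ell_{\frac{m}{m-1},\infty}},\qquad\text{where } E(S):=\max_{1\le k\le m}\operatorname{card}\{i_k:\mathbf i\in S\}.\]
   Context: $\mathcal M(m,n)=\{\mathbf i=(i_1,\dots,i_m):1\le i_k\le n\}$. For $1\le p<\infty$ and a finite index set $I$, $\|x\|_{\ell_{p,\infty}(I)}=\sup_k k^{1/p}x_k^*$, where $x^*$ is the non-increasing rearrangement of $(|x_i|)_{i\in I}$. *)

theory Defs
  imports "HOL-Analysis.Analysis" "HOL-Library.Multiset"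
begin

definition multi_indices :: "nat \<Rightarrow> nat \<Rightarrow> (nat \<Rightarrow> nat) set" where
  "multi_indices m n = PiE {1..m} (\<lambda>_. {1..n})"

text \<open>Non-increasing rearrangement x*_k (k \<ge> 1) of (|x_i|)_{i in I}, I finite;
  x*_k = 0 for k > card I.\<close>
definition decr_rearr :: "('i \<Rightarrow> complex) \<Rightarrow> 'i set \<Rightarrow> nat \<Rightarrow> real" where
  "decr_rearr x I k =
     (let xs = rev (sorted_list_of_multiset (image_mset (\<lambda>i. cmod (x i)) (mset_set I)))
      in if 1 \<le> k \<and> k \<le> length xs then xs ! (k - 1) else 0)"

definition weak_lp_norm :: "real \<Rightarrow> 'i set \<Rightarrow> ('i \<Rightarrow> complex) \<Rightarrow> real" where
  "weak_lp_norm p I x = (SUP k\<in>{1::nat..}. real k powr (1 / p) * decr_rearr x I k)"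

definition E_card :: "nat \<Rightarrow> (nat \<Rightarrow> nat) set \<Rightarrow> nat" where
  "E_card m S = Max ((\<lambda>k. card ((\<lambda>i. i k) ` S)) ` {1..m})"

end

theory Submission
  imports Defs
begin

text \<open>Write \<open>N\<close> for the weak norm and \<open>p' = m/(m-1)\<close>. The \<open>k\<close>-th largest modulus is at most
  \<open>N k^(-(m-1)/m)\<close>, so any \<open>s\<close> entries of \<open>a\<close> have total modulus at most
  \<open>N \<Sum>k\<le>s k^(-(m-1)/m) \<le> m N s^(1/m)\<close>. A set \<open>S\<close> of multi-indices lies in the product of its
  \<open>m\<close> coordinate projections, each of cardinality at most \<open>E(S)\<close>, hence \<open>card S \<le> E(S)^m\<close>
  and \<open>s^(1/m) \<le> E(S)\<close> for \<open>s = card S\<close>.\<close>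

lemma sorted_desc_nth_le_of_subset_mset:
  fixes ys xs :: "'a::linorder list"
  assumes sorted_ys: "sorted_wrt (\<ge>) ys" and sorted_xs: "sorted_wrt (\<ge>) xs"
    and sub: "mset ys \<subseteq># mset xs" and k: "k < length ys"
  shows "k < length xs" and "ys ! k \<le> xs ! k"
proof -
  show k_xs: "k < length xs"
    using size_mset_mono[OF sub] k by simp
  show "ys ! k \<le> xs ! k"
  proof (rule ccontr)
    assume "\<not> ys ! k \<le> xs ! k"
    hence lt: "xs ! k < ys ! k" by simp
    define c where "c = ys ! k"
    have "{..k} \<subseteq> {i. i < length ys \<and> c \<le> ys ! i}"
    proof
      fix i assume "i \<in> {..k}"
      thus "i \<in> {i. i < length ys \<and> c \<le> ys ! i}"
        using sorted_ys k unfolding c_def sorted_wrt_iff_nth_less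
        by (cases "i = k") auto
    qed
    hence "card {..k} \<le> card {i. i < length ys \<and> c \<le> ys ! i}"
      by (intro card_mono) auto
    hence "Suc k \<le> length (filter ((\<le>) c) ys)"
      by (simp add: length_filter_conv_card)
    moreover have "{i. i < length xs \<and> c \<le> xs ! i} \<subseteq> {..<k}"
    proof
      fix i assume i: "i \<in> {i. i < length xs \<and> c \<le> xs ! i}"
      show "i \<in> {..<k}"
      proof (rule ccontr)
        assume "i \<notin> {..<k}"
        hence "xs ! i \<le> xs ! k"
          using sorted_xs i unfolding sorted_wrt_iff_nth_less by (cases "k = i") auto
        hence "xs ! i < c"
          using lt unfolding c_def by (rule order.strict_trans1)
        thus False using i leD by blast
      qed
    qed
    hence "card {i. i < length xs \<and> c \<le> xs ! i} \<le> card {..<k}"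
      by (intro card_mono) auto
    hence "length (filter ((\<le>) c) xs) \<le> k"
      by (simp add: length_filter_conv_card)
    moreover have "length (filter ((\<le>) c) ys) \<le> length (filter ((\<le>) c) xs)"
      by (metis mset_filter size_mset size_mset_mono multiset_filter_mono sub)
    ultimately show False by simp
  qed
qed

lemma decr_rearr_nonneg: "0 \<le> decr_rearr x I k"
proof -
  define xs where "xs = rev (sorted_list_of_multiset (image_mset (\<lambda>i. cmod (x i)) (mset_set I)))"
  have "0 \<le> v" if "v \<in> set xs" for v
    using that unfolding xs_def
    by (metis (no_types, lifting) image_iff mset_sorted_list_of_multiset norm_ge_zero
        set_image_mset set_mset_mset set_rev)
  thus ?thesis
    unfolding decr_rearr_def Let_def xs_def[symmetric] by auto
qed

lemma sum_cmod_le_sum_decr_rearr: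
  assumes "finite I" and "J \<subseteq> I"
  shows "(\<Sum>i\<in>J. cmod (x i)) \<le> (\<Sum>k=1..card J. decr_rearr x I k)"
proof -
  define f where "f = (\<lambda>i. cmod (x i))"
  define xs where "xs = rev (sorted_list_of_multiset (image_mset f (mset_set I)))"
  define ys where "ys = rev (sorted_list_of_multiset (image_mset f (mset_set J)))"
  have sorted_xs: "sorted_wrt (\<ge>) xs" and sorted_ys: "sorted_wrt (\<ge>) ys"
    unfolding xs_def ys_def by (simp_all add: sorted_wrt_rev)
  have sub: "mset ys \<subseteq># mset xs"
    unfolding xs_def ys_def
    by (simp add: image_mset_subseteq_mono subset_imp_msubset_mset_set assms)
  have len_ys: "length ys = card J"
    unfolding ys_def by (metis length_rev mset_sorted_list_of_multiset size_image_mset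
        size_mset size_mset_set)
  note nth_le = sorted_desc_nth_le_of_subset_mset[OF sorted_ys sorted_xs sub]
  have decr_xs: "decr_rearr x I (Suc k) = xs ! k" if "k < length xs" for k
    using that by (simp add: decr_rearr_def xs_def f_def)
  have "(\<Sum>i\<in>J. f i) = sum_list ys"
    unfolding ys_def
    by (metis sum_unfold_sum_mset mset_rev mset_sorted_list_of_multiset sum_mset_sum_list)
  also have "\<dots> = (\<Sum>k<card J. ys ! k)"
    by (simp add: sum_list_sum_nth len_ys lessThan_atLeast0)
  also have "\<dots> \<le> (\<Sum>k<card J. xs ! k)"
    by (intro sum_mono) (use nth_le len_ys in auto)
  also have "\<dots> = (\<Sum>k<card J. decr_rearr x I (Suc k))"
    by (intro sum.cong) (use nth_le(1) len_ys decr_xs in auto)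
  also have "\<dots> = (\<Sum>k=1..card J. decr_rearr x I k)"
    by (simp add: sum.atLeast1_atMost_eq)
  finally show ?thesis unfolding f_def .
qed

lemma decr_rearr_le_weak_lp_norm:
  assumes "finite I" and "k \<ge> 1"
  shows "real k powr (1 / p) * decr_rearr x I k \<le> weak_lp_norm p I x"
proof -
  let ?g = "\<lambda>k::nat. real k powr (1 / p) * decr_rearr x I k"
  have "length (sorted_list_of_multiset (image_mset (\<lambda>i. cmod (x i)) (mset_set I))) = card I"
    by (metis mset_sorted_list_of_multiset size_image_mset size_mset size_mset_set)
  hence vanish: "?g k = 0" if "k > card I" for k
    using that by (simp add: decr_rearr_def Let_def)
  have "?g ` {1..} \<subseteq> insert 0 (?g ` {1..card I})"
  proof
    fix y assume "y \<in> ?g ` {1..}"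
    then obtain k where "k \<ge> 1" and "y = ?g k" by auto
    thus "y \<in> insert 0 (?g ` {1..card I})"
      using vanish by (cases "k \<le> card I") auto
  qed
  hence "bdd_above (?g ` {1..})"
    by (meson bdd_above_finite bdd_above_mono finite_imageI finite_atLeastAtMost finite_insert)
  thus ?thesis
    unfolding weak_lp_norm_def by (rule cSUP_upper[rotated]) (use assms in simp)
qed

lemma weak_lp_norm_nonneg:
  assumes "finite I"
  shows "0 \<le> weak_lp_norm p I x"
  using decr_rearr_le_weak_lp_norm[OF assms, of 1 p x] decr_rearr_nonneg[of x I 1] by simp

text \<open>The \<open>s\<close>-th term of \<open>\<Sum> k^(-(m-1)/m)\<close> is dominated by the increment of \<open>m s^(1/m)\<close>:
  with \<open>u = s^(1/m)\<close> and \<open>v = (s-1)^(1/m)\<close> one has \<open>1 = u^m - v^m \<le> (u - v) m u^(m-1)\<close>.\<close>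

lemma powr_le_increment_root:
  fixes m s :: nat
  assumes m: "m \<ge> 1" and s: "s \<ge> 1"
  shows "real s powr (-((real m - 1) / real m))
           \<le> real m * (real s powr (1/m) - real (s - 1) powr (1/m))"
proof -
  define u where "u = real s powr (1/m)"
  define v where "v = real (s - 1) powr (1/m)"
  have u_pos: "u > 0" and v_nonneg: "v \<ge> 0"
    using s by (simp_all add: u_def v_def)
  have v_le_u: "v \<le> u"
    unfolding u_def v_def using m by (intro powr_mono2) auto
  have u_pow: "u ^ m = real s" and v_pow: "v ^ m = real (s - 1)"
    using m by (simp_all add: u_def v_def root_powr_inverse[symmetric])
  have "1 = u ^ m - v ^ m"
    using u_pow v_pow s by simp
  also have "\<dots> = (u - v) * (\<Sum>i<m. v ^ (m - Suc i) * u ^ i)"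
    by (rule power_diff_sumr2)
  also have "\<dots> \<le> (u - v) * (\<Sum>i<m. u ^ (m - 1))"
  proof (intro mult_left_mono sum_mono)
    fix i assume "i \<in> {..<m}"
    hence "u ^ (m - Suc i) * u ^ i = u ^ (m - 1)"
      by (simp add: power_add[symmetric])
    moreover have "v ^ (m - Suc i) * u ^ i \<le> u ^ (m - Suc i) * u ^ i"
      by (intro mult_right_mono power_mono) (use v_nonneg v_le_u u_pos in auto)
    ultimately show "v ^ (m - Suc i) * u ^ i \<le> u ^ (m - 1)" by simp
  qed (use v_le_u in auto)
  finally have key: "1 \<le> (u - v) * (real m * u ^ (m - 1))" by simp
  have "u ^ (m - 1) = real s powr ((real m - 1) / real m)"
    unfolding u_def using m s by (simp add: powr_realpow[symmetric] powr_powr of_nat_diff)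
  hence "real s powr (-((real m - 1) / real m)) = 1 / u ^ (m - 1)"
    by (simp add: powr_minus divide_inverse)
  also have "\<dots> \<le> real m * (u - v)"
    using key u_pos by (simp add: divide_le_eq mult_ac)
  finally show ?thesis by (simp add: u_def v_def)
qed

lemma sum_powr_le_root:
  fixes m s :: nat
  assumes "m \<ge> 1"
  shows "(\<Sum>k=1..s. real k powr (-((real m - 1) / real m))) \<le> real m * real s powr (1/m)"
proof (induction s)
  case (Suc s)
  have "(\<Sum>k=1..Suc s. real k powr (-((real m - 1) / real m)))
      \<le> real m * real s powr (1/m)
        + real m * (real (Suc s) powr (1/m) - real (Suc s - 1) powr (1/m))"
    using Suc.IH powr_le_increment_root[OF assms, of "Suc s"] by simp
  thus ?case by (simp add: algebra_simps)
qed simp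

lemma sum_decr_rearr_le_weak_lp_norm:
  fixes m s :: nat
  assumes m: "m \<ge> 1" and "finite I"
  shows "(\<Sum>k=1..s. decr_rearr x I k)
           \<le> real m * real s powr (1/m) * weak_lp_norm (real m / (real m - 1)) I x"
proof -
  define N where "N = weak_lp_norm (real m / (real m - 1)) I x"
  have exponent: "1 / (real m / (real m - 1)) = (real m - 1) / real m"
    by simp
  have "decr_rearr x I k \<le> N * real k powr (-((real m - 1) / real m))" if "k \<in> {1..s}" for k
    using decr_rearr_le_weak_lp_norm[OF assms(2), of k "real m / (real m - 1)" x] that
    by (simp add: N_def exponent powr_minus field_simps)
  hence "(\<Sum>k=1..s. decr_rearr x I k) \<le> (\<Sum>k=1..s. N * real k powr (-((real m - 1) / real m)))"
    by (rule sum_mono)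
  also have "\<dots> = N * (\<Sum>k=1..s. real k powr (-((real m - 1) / real m)))"
    by (simp add: sum_distrib_left)
  also have "\<dots> \<le> N * (real m * real s powr (1/m))"
    by (intro mult_left_mono sum_powr_le_root m) (use weak_lp_norm_nonneg assms(2) N_def in auto)
  finally show ?thesis by (simp add: N_def mult_ac)
qed

lemma card_le_prod_card_proj:
  assumes "finite S" and "finite A" and "S \<subseteq> PiE A B"
  shows "card S \<le> (\<Prod>k\<in>A. card ((\<lambda>i. i k) ` S))"
proof -
  have "S \<subseteq> PiE A (\<lambda>k. (\<lambda>i. i k) ` S)"
    using assms(3) by (auto simp: PiE_iff)
  hence "card S \<le> card (PiE A (\<lambda>k. (\<lambda>i. i k) ` S))"
    by (intro card_mono finite_PiE) (use assms(1,2) in auto)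
  thus ?thesis by (simp add: card_PiE assms(2))
qed

lemma card_le_E_card_power:
  assumes "finite S" and "S \<subseteq> PiE {1..m} B"
  shows "card S \<le> E_card m S ^ m"
proof -
  have "card S \<le> (\<Prod>k\<in>{1..m}. card ((\<lambda>i. i k) ` S))"
    by (rule card_le_prod_card_proj) (use assms in auto)
  also have "\<dots> \<le> (\<Prod>k\<in>{1..m}. E_card m S)"
    by (intro prod_mono) (auto simp: E_card_def)
  finally show ?thesis by simp
qed

lemma root_card_le_E_card:
  assumes "finite S" and "S \<subseteq> PiE {1..m} B" and "m \<ge> 1"
  shows "real (card S) powr (1/m) \<le> real (E_card m S)"
proof -
  have "real (card S) powr (1/m) \<le> real (E_card m S ^ m) powr (1/m)"
    using card_le_E_card_power[OF assms(1,2)] by (intro powr_mono2) auto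
  also have "\<dots> = real (E_card m S)"
    using assms(3) by (simp add: root_powr_inverse[symmetric] real_root_power_cancel)
  finally show ?thesis .
qed

lemma E_card_pos:
  assumes "finite S" and "S \<noteq> {}" and "m \<ge> 1"
  shows "E_card m S \<ge> 1"
proof -
  have "card ((\<lambda>i. i 1) ` S) \<ge> 1"
    using assms(1,2) by (simp add: Suc_le_eq card_gt_0_iff)
  also have "\<dots> \<le> E_card m S"
    unfolding E_card_def by (rule Max_ge) (use assms(3) in auto)
  finally show ?thesis .
qed

theorem lemma4p1:
  fixes m n :: nat and a :: "(nat \<Rightarrow> nat) \<Rightarrow> complex" and S :: "(nat \<Rightarrow> nat) set"
  assumes "m \<ge> 2" and "n \<ge> 1"
    and "S \<subseteq> multi_indices m n" and "S \<noteq> {}"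
  shows "(\<Sum>i\<in>S. cmod (a i)) / real (E_card m S)
           \<le> real m * weak_lp_norm (real m / (real m - 1)) (multi_indices m n) a"
proof -
  define I where "I = multi_indices m n"
  define N where "N = weak_lp_norm (real m / (real m - 1)) I a"
  define E where "E = E_card m S"
  have fin_I: "finite I"
    unfolding I_def multi_indices_def by (intro finite_PiE) auto
  have fin_S: "finite S"
    using assms(3) fin_I finite_subset I_def by blast
  have E_pos: "E \<ge> 1"
    unfolding E_def using E_card_pos fin_S assms by simp
  have root_card_S: "real (card S) powr (1/m) \<le> real E"
    unfolding E_def using root_card_le_E_card fin_S assms(1,3)
    by (simp add: multi_indices_def)
  have "(\<Sum>i\<in>S. cmod (a i)) \<le> (\<Sum>k=1..card S. decr_rearr a I k)"
    using sum_cmod_le_sum_decr_rearr fin_I assms(3) I_def by blast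
  also have "\<dots> \<le> real m * real (card S) powr (1/m) * N"
    unfolding N_def by (rule sum_decr_rearr_le_weak_lp_norm) (use fin_I assms(1) in auto)
  also have "\<dots> \<le> real m * real E * N"
    by (intro mult_right_mono mult_left_mono root_card_S)
       (use weak_lp_norm_nonneg fin_I N_def in auto)
  finally show ?thesis
    using E_pos by (simp add: divide_le_eq mult_ac E_def N_def I_def)
qed

end
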